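(* Let $I$ be a finite index set, $E_i$ ($i\in I$) and $F$ nondeterministic expressions, $X$ a variable, and $p_i>0$ with $\sum_{i\in I}p_i=1$. Then $\mathrm{rec}\,X.\big(\tau.\bigoplus_{i\in I}p_i(X+E_i)+F\big)\ \simeq\ \mathrm{rec}\,X.\big(\tau.\partial(X)+\sum_{i\in I}E_i+F\big)$.
   Context: Fix a set $\mathsf{Act}$ of actions containing $\tau$ and a set $\mathsf{Var}$ of variables. Nondeterministic expressions: $E ::= 0 \mid X \mid \alpha.P \mid \mathrm{rec}\,X.E \mid E + E$; probabilistic expressions: $P ::= \partial(E) \mid P \oplus_p P$ ($0<p<1$). $\sum_{i\in I}E_i$ is an iterated $+$; $\bigoplus_{i\in I}p_iE_i$ denotes an iterated $\oplus$ of the $\partial(E_i)$ with weights chosen so that $E_i$ has probability $p_i$. $\mathrm{rec}\,X$ binds $X$; closed means no free variables; $E[\vec F/\vec X]$ is capture-avoiding substitution. Subdistributions $\mu$ over $S$: $\mu:S\to\mathbb R_{\ge0}$, $|\mu|=\sum\mu(s)\le1$; $\delta_s$ Dirac. Semantics: least relations with $\partial(E)\mapsto\delta_E$; $P\oplus_pQ\mapsto p\mu+(1-p)\nu$ if $P\mapsto\mu,Q\mapsto\nu$; $\alpha.P\xrightarrow{\alpha}\mu$ if $P\mapsto\mu$; $\mathrm{rec}\,X.E\xrightarrow{\alpha}\mu$ if $E[\mathrm{rec}\,X.E/X]\xrightarrow{\alpha}\mu$; $E+F\xrightarrow{\alpha}\mu$ and $F+E\xrightarrow{\alpha}\mu$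 if $E\xrightarrow{\alpha}\mu$. Combined transitions on subdistributions: least relation with $\delta_E\xrightarrow{\alpha}\mu$ if $E\xrightarrow{\alpha}\mu$, closed under $\sum p_i\nu_i\xrightarrow{\alpha}\sum p_i\mu_i$ ($\nu_i\xrightarrow{\alpha}\mu_i$, $p_i\ge0$, $\sum p_i\le1$). A derivation is $(\mu_i^{\to},\mu_i^{\times})_{i\in\mathbb N}$ with $\mu_i^{\to}\xrightarrow{\tau}\mu^{\to}_{i+1}+\mu^{\times}_{i+1}$; $\mu\Rightarrow\nu$ iff a derivation has $\mu=\mu_0^{\to}+\mu_0^{\times}$, $\nu=\sum_i\mu_i^\times$. $\mu\xRightarrow{\alpha}\nu$ iff $\mu\Rightarrow\xrightarrow{\alpha}\Rightarrow\nu$; $\xRightarrow{\hat\alpha}$ is $\Rightarrow$ for $\alpha=\tau$, else $\xRightarrow{\alpha}$. Lifting of a relation to subdistributions: least relation with $\delta_E\mathcal R\delta_F$ for $E\mathcal RF$, closed under convex combinations with coefficients summing to at most 1. Weak bisimulation on closed expressions: if $E\mathcal RF$ and $E\xrightarrow{\alpha}\mu$ then $F\xRightarrow{\hat\alpha}\nu$ with $\mu\mathcal R\nu$, and symmetrically; $\approx$ is weak bisimilarity. For closed $E,F$: $E\simeq F$ iff $E\xrightarrow{\alpha}\mu$ implies $F\xRightarrow{\alpha}\nu$ with $\mu\approx\nu$ and symmetrically. For open expressions with free variables $\vec X$: $E\simeq F$ iff $E[\vec G/\vec X]\simeq F[\vec G/\vec X]$ for all closed $\vec G$. *)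

theory Defs
  imports "HOL-Analysis.Infinite_Sum"
begin

datatype 'a act = Tau | Act 'a

typedef openprob = "{p::real. 0 < p \<and> p < 1}"
  by (rule exI[of _ "1/2"]) auto

datatype ('a, 'v) nexp =
    Nil
  | Var 'v
  | Pre "'a act" "('a, 'v) pexp"
  | Rec 'v "('a, 'v) nexp"
  | Plus "('a, 'v) nexp" "('a, 'v) nexp"
and ('a, 'v) pexp =
    Dirac "('a, 'v) nexp"
  | PChoice "('a, 'v) pexp" openprob "('a, 'v) pexp"

fun fvN :: "('a, 'v) nexp \<Rightarrow> 'v set"
and fvP :: "('a, 'v) pexp \<Rightarrow> 'v set" where
  "fvN Nil = {}"
| "fvN (Var X) = {X}"
| "fvN (Pre a P) = fvP P"
| "fvN (Rec X E) = fvN E - {X}"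
| "fvN (Plus E F) = fvN E \<union> fvN F"
| "fvP (Dirac E) = fvN E"
| "fvP (PChoice P p Q) = fvP P \<union> fvP Q"

definition closed :: "('a, 'v) nexp \<Rightarrow> bool" where
  "closed E \<longleftrightarrow> fvN E = {}"

text \<open>Bound variables are protected; substitution is
capture-avoiding whenever the substituted expressions are closed, which is the only
case used below (unfolding of closed recursions, closing substitutions).\<close>

fun substN :: "('v \<Rightarrow> ('a, 'v) nexp) \<Rightarrow> ('a, 'v) nexp \<Rightarrow> ('a, 'v) nexp"
and substP :: "('v \<Rightarrow> ('a, 'v) nexp) \<Rightarrow> ('a, 'v) pexp \<Rightarrow> ('a, 'v) pexp" where
  "substN \<sigma> Nil = Nil"
| "substN \<sigma> (Var X) = \<sigma> X"
| "substN \<sigma> (Pre a P) = Pre a (substP \<sigma> P)"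
| "substN \<sigma> (Rec X E) = Rec X (substN (\<sigma>(X := Var X)) E)"
| "substN \<sigma> (Plus E F) = Plus (substN \<sigma> E) (substN \<sigma> F)"
| "substP \<sigma> (Dirac E) = Dirac (substN \<sigma> E)"
| "substP \<sigma> (PChoice P p Q) = PChoice (substP \<sigma> P) p (substP \<sigma> Q)"

fun nsum :: "('i \<Rightarrow> ('a, 'v) nexp) \<Rightarrow> 'i list \<Rightarrow> ('a, 'v) nexp" where
  "nsum E [] = Nil"
| "nsum E [i] = E i"
| "nsum E (i # j # is) = Plus (E i) (nsum E (j # is))"

text \<open>Iterated probabilistic choice: \<open>E i\<close> gets probability \<open>p i\<close> (weights normalised
along the list, so that with total weight 1 the index \<open>i\<close> has probability \<open>p i\<close>).\<close>

fun pbig :: "('i \<Rightarrow> real) \<Rightarrow> ('i \<Rightarrow> ('a, 'v) nexp) \<Rightarrow> 'i list \<Rightarrow> ('a, 'v) pexp" where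
  "pbig p E [] = Dirac Nil"
| "pbig p E [i] = Dirac (E i)"
| "pbig p E (i # j # is) =
     PChoice (Dirac (E i)) (Abs_openprob (p i / sum_list (map p (i # j # is)))) (pbig p E (j # is))"

type_synonym 's subdist = "'s \<Rightarrow> real"

definition is_subdist :: "'s subdist \<Rightarrow> bool" where
  "is_subdist \<mu> \<longleftrightarrow> (\<forall>s. 0 \<le> \<mu> s) \<and> \<mu> summable_on UNIV \<and> infsum \<mu> UNIV \<le> 1"

definition dirac :: "'s \<Rightarrow> 's subdist" where
  "dirac s = (\<lambda>t. if t = s then 1 else 0)"

definition comb :: "'k set \<Rightarrow> ('k \<Rightarrow> real) \<Rightarrow> ('k \<Rightarrow> 's subdist) \<Rightarrow> 's subdist" where
  "comb K p \<mu> = (\<lambda>s. \<Sum>\<^sub>\<infinity>k\<in>K. p k * \<mu> k s)"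

definition weights :: "'k set \<Rightarrow> ('k \<Rightarrow> real) \<Rightarrow> bool" where
  "weights K p \<longleftrightarrow> countable K \<and> (\<forall>k\<in>K. 0 \<le> p k) \<and> p summable_on K \<and> infsum p K \<le> 1"

fun pden :: "('a, 'v) pexp \<Rightarrow> ('a, 'v) nexp subdist" where
  "pden (Dirac E) = dirac E"
| "pden (PChoice P p Q) = (\<lambda>s. Rep_openprob p * pden P s + (1 - Rep_openprob p) * pden Q s)"

inductive step :: "('a, 'v) nexp \<Rightarrow> 'a act \<Rightarrow> ('a, 'v) nexp subdist \<Rightarrow> bool" where
  step_pre: "step (Pre a P) a (pden P)"
| step_rec: "step (substN (Var(X := Rec X E)) E) a \<mu> \<Longrightarrow> step (Rec X E) a \<mu>"
| step_plusL: "step E a \<mu> \<Longrightarrow> step (Plus E F) a \<mu>"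
| step_plusR: "step E a \<mu> \<Longrightarrow> step (Plus F E) a \<mu>"

text \<open>Combined transitions between subdistributions (countable combinations, indexed
by subsets of \<open>nat\<close>, which covers every countable index set).\<close>
inductive ctrans :: "('a, 'v) nexp subdist \<Rightarrow> 'a act \<Rightarrow> ('a, 'v) nexp subdist \<Rightarrow> bool" where
  ctrans_base: "step E a \<mu> \<Longrightarrow> ctrans (dirac E) a \<mu>"
| ctrans_comb: "\<lbrakk>weights (K :: nat set) p; \<forall>k\<in>K. ctrans (\<nu> k) a (\<mu> k)\<rbrakk>
                \<Longrightarrow> ctrans (comb K p \<nu>) a (comb K p \<mu>)"

definition tau_star :: "('a, 'v) nexp subdist \<Rightarrow> ('a, 'v) nexp subdist \<Rightarrow> bool" where
  "tau_star \<mu> \<nu> \<longleftrightarrow>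
     (\<exists>mt mx :: nat \<Rightarrow> ('a, 'v) nexp subdist.
        (\<forall>i. is_subdist (mt i) \<and> is_subdist (mx i)) \<and>
        (\<forall>i. ctrans (mt i) Tau (\<lambda>s. mt (Suc i) s + mx (Suc i) s)) \<and>
        \<mu> = (\<lambda>s. mt 0 s + mx 0 s) \<and>
        \<nu> = (\<lambda>s. \<Sum>\<^sub>\<infinity>i. mx i s))"

definition wtrans :: "('a, 'v) nexp subdist \<Rightarrow> 'a act \<Rightarrow> ('a, 'v) nexp subdist \<Rightarrow> bool" where
  "wtrans \<mu> a \<nu> \<longleftrightarrow> (\<exists>\<mu>1 \<mu>2. tau_star \<mu> \<mu>1 \<and> ctrans \<mu>1 a \<mu>2 \<and> tau_star \<mu>2 \<nu>)"

definition hat_wtrans :: "('a, 'v) nexp subdist \<Rightarrow> 'a act \<Rightarrow> ('a, 'v) nexp subdist \<Rightarrow> bool" where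
  "hat_wtrans \<mu> a \<nu> \<longleftrightarrow> (if a = Tau then tau_star \<mu> \<nu> else wtrans \<mu> a \<nu>)"

inductive lift :: "('s \<Rightarrow> 's \<Rightarrow> bool) \<Rightarrow> 's subdist \<Rightarrow> 's subdist \<Rightarrow> bool" for R where
  lift_base: "R E F \<Longrightarrow> lift R (dirac E) (dirac F)"
| lift_comb: "\<lbrakk>weights (K :: nat set) p; \<forall>k\<in>K. lift R (\<mu> k) (\<nu> k)\<rbrakk>
              \<Longrightarrow> lift R (comb K p \<mu>) (comb K p \<nu>)"

definition weak_bisim :: "(('a, 'v) nexp \<Rightarrow> ('a, 'v) nexp \<Rightarrow> bool) \<Rightarrow> bool" where
  "weak_bisim R \<longleftrightarrow>
     (\<forall>E F. R E F \<longrightarrow> closed E \<and> closed F \<and>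
        (\<forall>a \<mu>. step E a \<mu> \<longrightarrow> (\<exists>\<nu>. hat_wtrans (dirac F) a \<nu> \<and> lift R \<mu> \<nu>)) \<and>
        (\<forall>a \<nu>. step F a \<nu> \<longrightarrow> (\<exists>\<mu>. hat_wtrans (dirac E) a \<mu> \<and> lift R \<mu> \<nu>)))"

definition wbisim :: "('a, 'v) nexp \<Rightarrow> ('a, 'v) nexp \<Rightarrow> bool" where
  "wbisim E F \<longleftrightarrow> (\<exists>R. weak_bisim R \<and> R E F)"

definition ccong :: "('a, 'v) nexp \<Rightarrow> ('a, 'v) nexp \<Rightarrow> bool" where
  "ccong E F \<longleftrightarrow> closed E \<and> closed F \<and>
     (\<forall>a \<mu>. step E a \<mu> \<longrightarrow> (\<exists>\<nu>. wtrans (dirac F) a \<nu> \<and> lift wbisim \<mu> \<nu>)) \<and>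
     (\<forall>a \<nu>. step F a \<nu> \<longrightarrow> (\<exists>\<mu>. wtrans (dirac E) a \<mu> \<and> lift wbisim \<mu> \<nu>))"

definition cong :: "('a, 'v) nexp \<Rightarrow> ('a, 'v) nexp \<Rightarrow> bool" where
  "cong E F \<longleftrightarrow> (\<forall>\<sigma>. (\<forall>X. closed (\<sigma> X)) \<longrightarrow> ccong (substN \<sigma> E) (substN \<sigma> F))"

end

(*
  Write L and R for the closed instances of the two sides. They are related by the relation
  consisting of all closed contexts around the pair (L, R) together with the pairs
  (L + E_i[L/X], R). The tau-step of L into the distribution of the states L + E_i[L/X] is
  matched by the tau-loop of R, and all other steps are matched step for step, except that a
  step of R through a summand E_k is answered by a weak transition of L: after its tau-step,
  L keeps cycling through the tau-steps of the states L + E_i[L/X], which all lead back to the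
  same distribution, until it sits in L + E_k[L/X]. The probability of never getting there
  decays geometrically, so this happens with probability one, and L + E_k[L/X] then performs
  the step of E_k. As the first step of L is matched by a proper tau-step of R and vice versa,
  the relation is rooted at (L, R).
*)

theory Submission
  imports Defs
begin

lemma substN_cong:
  "(\<forall>Y\<in>fvN G. \<sigma> Y = \<sigma>' Y) \<Longrightarrow> substN \<sigma> G = substN \<sigma>' G"
  "(\<forall>Y\<in>fvP P. \<sigma> Y = \<sigma>' Y) \<Longrightarrow> substP \<sigma> P = substP \<sigma>' P"
  by (induct G and P arbitrary: \<sigma> \<sigma>' and \<sigma> \<sigma>') auto

lemma substN_Var: "substN Var (G :: ('a, 'v) nexp) = G" "substP Var (P :: ('a, 'v) pexp) = P"
  by (induct G and P) auto

lemma fvN_substN: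
  "fvN (substN \<sigma> G) \<subseteq> (\<Union>Y\<in>fvN G. fvN (\<sigma> Y))"
  "fvP (substP \<sigma> P) \<subseteq> (\<Union>Y\<in>fvP P. fvN (\<sigma> Y))"
proof (induct G and P arbitrary: \<sigma> and \<sigma>)
  case (Rec Y G)
  have IH: "fvN (substN (\<sigma>(Y := Var Y)) G) \<subseteq> (\<Union>Z\<in>fvN G. fvN ((\<sigma>(Y := Var Y)) Z))"
    by (rule Rec)
  show ?case
  proof
    fix x assume "x \<in> fvN (substN \<sigma> (Rec Y G))"
    then have x: "x \<in> fvN (substN (\<sigma>(Y := Var Y)) G)" "x \<noteq> Y" by auto
    then obtain Z where "Z \<in> fvN G" "x \<in> fvN ((\<sigma>(Y := Var Y)) Z)" using IH by blast
    with x show "x \<in> (\<Union>Y\<in>fvN (Rec Y G). fvN (\<sigma> Y))" by (auto split: if_splits)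
  qed
qed (auto, blast+)

lemma closed_substN:
  "(\<forall>Y\<in>fvN G. closed (\<sigma> Y)) \<Longrightarrow> closed (substN \<sigma> G)"
  using fvN_substN(1)[of \<sigma> G] by (auto simp: closed_def)

lemma substN_closed: "closed G \<Longrightarrow> substN \<sigma> G = G"
  using substN_cong(1)[of G \<sigma> Var] substN_Var(1) by (auto simp: closed_def)

lemma substN_substN:
  "(\<forall>Z\<in>fvN G. \<tau> Z = Var Z \<or> closed (\<tau> Z)) \<Longrightarrow>
     substN \<sigma> (substN \<tau> G) = substN (\<lambda>Z. substN \<sigma> (\<tau> Z)) G"
  "(\<forall>Z\<in>fvP P. \<tau> Z = Var Z \<or> closed (\<tau> Z)) \<Longrightarrow>
     substP \<sigma> (substP \<tau> P) = substP (\<lambda>Z. substN \<sigma> (\<tau> Z)) P"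
proof (induct G and P arbitrary: \<sigma> \<tau> and \<sigma> \<tau>)
  case (Rec Y G)
  have "\<forall>Z\<in>fvN G. (\<tau>(Y := Var Y)) Z = Var Z \<or> closed ((\<tau>(Y := Var Y)) Z)"
    using Rec.prems by auto
  then have "substN (\<sigma>(Y := Var Y)) (substN (\<tau>(Y := Var Y)) G)
      = substN (\<lambda>Z. substN (\<sigma>(Y := Var Y)) ((\<tau>(Y := Var Y)) Z)) G"
    using Rec.hyps by blast
  also have "\<dots> = substN ((\<lambda>Z. substN \<sigma> (\<tau> Z))(Y := Var Y)) G"
  proof (intro substN_cong(1) ballI)
    fix Z assume "Z \<in> fvN G"
    with Rec.prems have "Z \<noteq> Y \<Longrightarrow> \<tau> Z = Var Z \<or> closed (\<tau> Z)" by simp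
    then show "substN (\<sigma>(Y := Var Y)) ((\<tau>(Y := Var Y)) Z) = ((\<lambda>Z. substN \<sigma> (\<tau> Z))(Y := Var Y)) Z"
      by (cases "Z = Y") (auto simp: substN_closed)
  qed
  finally show ?case by simp
qed auto

lemma substN_Rec_unfold:
  assumes "\<forall>Z\<in>fvN (Rec Y H). closed (\<theta> Z)"
  shows "substN (Var(Y := substN \<theta> (Rec Y H))) (substN (\<theta>(Y := Var Y)) H)
       = substN (\<theta>(Y := substN \<theta> (Rec Y H))) H"
proof -
  let ?T = "substN \<theta> (Rec Y H)"
  have "substN (Var(Y := ?T)) (substN (\<theta>(Y := Var Y)) H)
      = substN (\<lambda>Z. substN (Var(Y := ?T)) ((\<theta>(Y := Var Y)) Z)) H"
    using assms by (intro substN_substN(1)) auto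
  also have "\<dots> = substN (\<theta>(Y := ?T)) H"
    using assms by (intro substN_cong(1)) (auto simp: substN_closed)
  finally show ?thesis .
qed

lemma substP_pbig: "substP \<sigma> (pbig p f xs) = pbig p (\<lambda>i. substN \<sigma> (f i)) xs"
  by (induct p f xs rule: pbig.induct) auto

lemma substN_nsum: "substN \<sigma> (nsum f xs) = nsum (\<lambda>i. substN \<sigma> (f i)) xs"
  by (induct f xs rule: nsum.induct) auto

lemma fvP_pbig: "fvP (pbig p f xs) \<subseteq> (\<Union>i\<in>set xs. fvN (f i))"
  by (induct p f xs rule: pbig.induct) auto

lemma fvN_nsum: "fvN (nsum f xs) \<subseteq> (\<Union>i\<in>set xs. fvN (f i))"
  by (induct f xs rule: nsum.induct) auto

definition has_mass :: "'s subdist \<Rightarrow> real \<Rightarrow> bool" where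
  "has_mass \<mu> m \<longleftrightarrow> (\<forall>s. 0 \<le> \<mu> s) \<and> (\<mu> has_sum m) UNIV"

lemma is_subdist_iff_has_mass: "is_subdist \<mu> \<longleftrightarrow> (\<exists>m\<le>1. has_mass \<mu> m)"
  unfolding has_mass_def is_subdist_def by (auto simp: has_sum_iff)

lemma has_mass_is_subdist: "has_mass \<mu> m \<Longrightarrow> m \<le> 1 \<Longrightarrow> is_subdist \<mu>"
  unfolding is_subdist_iff_has_mass by blast

lemma has_mass_dirac: "has_mass (dirac u) 1"
  unfolding has_mass_def dirac_def
  by (intro conjI allI has_sum_finite_neutralI[where B="{u}"]) auto

lemma has_mass_add: "has_mass \<mu> m \<Longrightarrow> has_mass \<nu> n \<Longrightarrow> has_mass (\<lambda>s. \<mu> s + \<nu> s) (m + n)"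
  unfolding has_mass_def by (auto intro: has_sum_add add_nonneg_nonneg)

lemma has_mass_scale: "has_mass \<mu> m \<Longrightarrow> 0 \<le> c \<Longrightarrow> has_mass (\<lambda>s. c * \<mu> s) (c * m)"
  unfolding has_mass_def by (auto intro: has_sum_cmult_right)

lemma has_mass_sum:
  "finite N \<Longrightarrow> (\<And>n. n \<in> N \<Longrightarrow> has_mass (\<mu> n) (m n) \<and> 0 \<le> w n) \<Longrightarrow>
     has_mass (\<lambda>s. \<Sum>n\<in>N. w n * \<mu> n s) (\<Sum>n\<in>N. w n * m n)"
proof (induct N rule: finite_induct)
  case empty then show ?case by (simp add: has_mass_def)
next
  case (insert x N)
  then have "has_mass (\<lambda>s. w x * \<mu> x s + (\<Sum>n\<in>N. w n * \<mu> n s)) (w x * m x + (\<Sum>n\<in>N. w n * m n))"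
    by (intro has_mass_add has_mass_scale) auto
  with insert show ?case by simp
qed

lemma is_subdist_scale: "is_subdist \<mu> \<Longrightarrow> 0 \<le> c \<Longrightarrow> c \<le> 1 \<Longrightarrow> is_subdist (\<lambda>s. c * \<mu> s)"
proof -
  assume "is_subdist \<mu>" "0 \<le> c" "c \<le> 1"
  moreover from \<open>is_subdist \<mu>\<close> obtain m where "m \<le> 1" "has_mass \<mu> m"
    unfolding is_subdist_iff_has_mass by blast
  moreover have "0 \<le> m" using \<open>has_mass \<mu> m\<close> has_sum_nonneg unfolding has_mass_def by blast
  ultimately have "has_mass (\<lambda>s. c * \<mu> s) (c * m)" "c * m \<le> 1"
    by (auto intro: has_mass_scale mult_le_one)
  then show ?thesis by (rule has_mass_is_subdist)
qed

lemma has_mass_pden: "has_mass (pden P) 1"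
proof (induct P rule: pden.induct)
  case (1 E) then show ?case by (simp add: has_mass_dirac)
next
  case (2 P r Q)
  have "0 < Rep_openprob r" "Rep_openprob r < 1" using Rep_openprob[of r] by auto
  with 2 have "has_mass (\<lambda>s. Rep_openprob r * pden P s + (1 - Rep_openprob r) * pden Q s)
      (Rep_openprob r * 1 + (1 - Rep_openprob r) * 1)"
    by (intro has_mass_add has_mass_scale) auto
  then show ?case by simp
qed

lemma has_mass_step: "step t a \<mu> \<Longrightarrow> has_mass \<mu> 1"
  by (induct rule: step.induct) (auto simp: has_mass_pden)

lemma is_subdist_step: "step t a \<mu> \<Longrightarrow> is_subdist \<mu>"
  using has_mass_step has_mass_is_subdist order_refl by metis

lemma is_subdist_dirac: "is_subdist (dirac u)"
  using has_mass_dirac has_mass_is_subdist order_refl by metis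

lemma step_Nil: "\<not> step Nil a \<mu>"
  by (auto elim: step.cases)

lemma step_Plus: "step (Plus A B) a \<mu> \<longleftrightarrow> step A a \<mu> \<or> step B a \<mu>"
  by (auto elim: step.cases intro: step.intros)

lemma step_Pre: "step (Pre b P) a \<mu> \<longleftrightarrow> a = b \<and> \<mu> = pden P"
  by (auto elim: step.cases intro: step.intros)

lemma step_Rec: "step (Rec Y G) a \<mu> \<longleftrightarrow> step (substN (Var(Y := Rec Y G)) G) a \<mu>"
  by (auto elim: step.cases intro: step.intros)

lemma step_nsum: "step (nsum f xs) a \<mu> \<longleftrightarrow> (\<exists>i\<in>set xs. step (f i) a \<mu>)"
  by (induct f xs rule: nsum.induct) (auto simp: step_Nil step_Plus)

text \<open>Step derivations of height at most \<open>n\<close>: induction on \<open>n\<close> reaches the steps of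
  summands nested inside an unfolded recursion, which rule induction on \<open>step\<close> does not.\<close>

inductive stepn :: "nat \<Rightarrow> ('a, 'v) nexp \<Rightarrow> 'a act \<Rightarrow> ('a, 'v) nexp subdist \<Rightarrow> bool" where
  stepn_pre: "stepn n (Pre a P) a (pden P)"
| stepn_rec: "stepn n (substN (Var(X := Rec X E)) E) a \<mu> \<Longrightarrow> stepn (Suc n) (Rec X E) a \<mu>"
| stepn_plusL: "stepn n E a \<mu> \<Longrightarrow> stepn (Suc n) (Plus E F) a \<mu>"
| stepn_plusR: "stepn n E a \<mu> \<Longrightarrow> stepn (Suc n) (Plus F E) a \<mu>"

lemma step_iff_stepn: "step t a \<mu> \<longleftrightarrow> (\<exists>n. stepn n t a \<mu>)"
proof
  show "step t a \<mu> \<Longrightarrow> \<exists>n. stepn n t a \<mu>"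
    by (induct rule: step.induct) (auto intro: stepn.intros)
  assume "\<exists>n. stepn n t a \<mu>"
  then obtain n where "stepn n t a \<mu>" ..
  then show "step t a \<mu>"
    by (induct rule: stepn.induct) (auto intro: step.intros)
qed

lemma stepn_Nil: "\<not> stepn n Nil a \<mu>"
  by (auto elim: stepn.cases)

lemma stepn_PreD: "stepn n (Pre b P) a \<mu> \<Longrightarrow> a = b \<and> \<mu> = pden P"
  by (auto elim: stepn.cases)

lemma stepn_PlusD: "stepn n (Plus A B) a \<mu> \<Longrightarrow> \<exists>m<n. stepn m A a \<mu> \<or> stepn m B a \<mu>"
  by (auto elim: stepn.cases)

lemma stepn_RecD:
  "stepn n (Rec Y G) a \<mu> \<Longrightarrow> \<exists>m<n. stepn m (substN (Var(Y := Rec Y G)) G) a \<mu>"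
  by (auto elim: stepn.cases)

lemma stepn_nsumD: "stepn n (nsum f xs) a \<mu> \<Longrightarrow> \<exists>i\<in>set xs. \<exists>m\<le>n. stepn m (f i) a \<mu>"
proof (induct f xs arbitrary: n rule: nsum.induct)
  case (1 f)
  then show ?case by (simp add: stepn_Nil)
next
  case (2 f i)
  then show ?case by (intro bexI[of _ i] exI[of _ n]) auto
next
  case (3 f i j "is")
  then obtain m where m: "m < n" "stepn m (f i) a \<mu> \<or> stepn m (nsum f (j # is)) a \<mu>"
    using stepn_PlusD by fastforce
  from m(2) show ?case
  proof
    assume "stepn m (f i) a \<mu>"
    with m(1) show ?thesis by (intro bexI[of _ i] exI[of _ m]) auto
  next
    assume "stepn m (nsum f (j # is)) a \<mu>"
    from 3(1)[OF this] obtain k m' where "k \<in> set (j # is)" "m' \<le> m" "stepn m' (f k) a \<mu>"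
      by blast
    with m(1) show ?thesis by (intro bexI[of _ k] exI[of _ m']) auto
  qed
qed

lemma step_substN_Rec:
  assumes "\<forall>Z\<in>fvN (Rec Y H). closed (\<theta> Z)"
  shows "step (substN \<theta> (Rec Y H)) a \<mu> \<longleftrightarrow> step (substN (\<theta>(Y := substN \<theta> (Rec Y H))) H) a \<mu>"
  using step_Rec[of Y "substN (\<theta>(Y := Var Y)) H"] substN_Rec_unfold[OF assms] by simp

lemma stepn_substN_RecD:
  assumes "\<forall>Z\<in>fvN (Rec Y H). closed (\<theta> Z)" "stepn n (substN \<theta> (Rec Y H)) a \<mu>"
  shows "\<exists>m<n. stepn m (substN (\<theta>(Y := substN \<theta> (Rec Y H))) H) a \<mu>"
  using stepn_RecD[of n Y "substN (\<theta>(Y := Var Y)) H"] substN_Rec_unfold[OF assms(1)] assms(2)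
  by simp

lemma comb_finite: "finite K \<Longrightarrow> comb K w \<mu> = (\<lambda>s. \<Sum>k\<in>K. w k * \<mu> k s)"
  unfolding comb_def by simp

lemma weights_finite: "finite K \<Longrightarrow> (\<forall>k\<in>K. 0 \<le> w k) \<Longrightarrow> sum w K \<le> 1 \<Longrightarrow> weights K w"
  unfolding weights_def by (auto intro: countable_finite)

lemma ctrans_scale:
  assumes "ctrans \<mu> a \<nu>" "0 \<le> c" "c \<le> 1"
  shows "ctrans (\<lambda>s. c * \<mu> s) a (\<lambda>s. c * \<nu> s)"
proof -
  have "weights {0::nat} (\<lambda>_. c)" using assms by (intro weights_finite) auto
  from ctrans_comb[OF this, of "\<lambda>_. \<mu>" a "\<lambda>_. \<nu>"] assms(1) show ?thesis
    by (simp add: comb_finite)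
qed

lemma ctrans_zero: "ctrans (\<lambda>s. 0) a (\<lambda>s. 0)"
  using ctrans_comb[of "{}" "\<lambda>_. 0" "\<lambda>_. \<lambda>s. 0" a "\<lambda>_. \<lambda>s. 0"]
  by (simp add: weights_finite comb_finite)

lemma ctrans_sum:
  assumes "finite (K :: nat set)" "\<forall>k\<in>K. 0 \<le> w k" "sum w K \<le> 1" "\<forall>k\<in>K. step (t k) a (\<mu> k)"
  shows "ctrans (\<lambda>s. \<Sum>k\<in>K. w k * dirac (t k) s) a (\<lambda>s. \<Sum>k\<in>K. w k * \<mu> k s)"
proof -
  have "weights K w" using assms by (intro weights_finite) auto
  from ctrans_comb[OF this, of "\<lambda>k. dirac (t k)" a \<mu>] assms(4) show ?thesis
    by (simp add: comb_finite[OF assms(1)] ctrans_base)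
qed

lemma infsum_nat_single: "(\<Sum>\<^sub>\<infinity>i::nat. if i = j then c else 0) = (c :: real)"
  by (rule infsumI, rule has_sum_finite_neutralI[where B="{j}"]) auto

lemma is_subdist_zero: "is_subdist (\<lambda>s. 0)"
  by (simp add: is_subdist_def)

lemma tau_star_refl:
  fixes \<mu> :: "('a, 'v) nexp subdist"
  assumes "is_subdist \<mu>"
  shows "tau_star \<mu> \<mu>"
proof -
  define mt :: "nat \<Rightarrow> ('a, 'v) nexp subdist" where "mt i = (\<lambda>s. 0)" for i
  define mx where "mx i = (if i = 0 then \<mu> else (\<lambda>s. 0))" for i :: nat
  have "(\<lambda>i. mx i s) = (\<lambda>i. if i = 0 then \<mu> s else 0)" for s
    by (rule ext) (simp add: mx_def)
  then have "\<mu> = (\<lambda>s. \<Sum>\<^sub>\<infinity>i. mx i s)"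
    by (simp add: infsum_nat_single)
  moreover have "\<mu> = (\<lambda>s. mt 0 s + mx 0 s)"
    by (simp add: mt_def mx_def)
  moreover have "\<forall>i. is_subdist (mt i) \<and> is_subdist (mx i)"
    using assms by (simp add: mt_def mx_def is_subdist_zero)
  moreover have "\<forall>i. ctrans (mt i) Tau (\<lambda>s. mt (Suc i) s + mx (Suc i) s)"
    by (simp add: mt_def mx_def ctrans_zero)
  ultimately show ?thesis unfolding tau_star_def by blast
qed

lemma tau_star_prefix:
  assumes "is_subdist \<mu>" "ctrans \<mu> Tau \<rho>" "tau_star \<rho> \<kappa>"
  shows "tau_star \<mu> \<kappa>"
proof -
  obtain mt mx where d: "\<forall>i. is_subdist (mt i) \<and> is_subdist (mx i)"
    "\<forall>i. ctrans (mt i) Tau (\<lambda>s. mt (Suc i) s + mx (Suc i) s)"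
    "\<rho> = (\<lambda>s. mt 0 s + mx 0 s)" "\<kappa> = (\<lambda>s. \<Sum>\<^sub>\<infinity>i. mx i s)"
    using assms(3) unfolding tau_star_def by blast
  define mt' where "mt' i = (case i of 0 \<Rightarrow> \<mu> | Suc j \<Rightarrow> mt j)" for i
  define mx' where "mx' i = (case i of 0 \<Rightarrow> (\<lambda>s. 0) | Suc j \<Rightarrow> mx j)" for i
  have shift: "(\<Sum>\<^sub>\<infinity>i. mx' i s) = (\<Sum>\<^sub>\<infinity>i. mx i s)" for s
  proof -
    have "(\<Sum>\<^sub>\<infinity>i. mx' i s) = (\<Sum>\<^sub>\<infinity>i\<in>range Suc. mx' i s)"
      by (rule infsum_cong_neutral) (auto simp: mx'_def split: nat.splits)
    also have "\<dots> = (\<Sum>\<^sub>\<infinity>i. mx i s)"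
      by (subst infsum_reindex) (auto simp: mx'_def o_def)
    finally show ?thesis .
  qed
  have "\<forall>i. is_subdist (mt' i) \<and> is_subdist (mx' i)"
    using d(1) assms(1) is_subdist_zero
    by (auto simp: mt'_def mx'_def split: nat.splits)
  moreover have "\<forall>i. ctrans (mt' i) Tau (\<lambda>s. mt' (Suc i) s + mx' (Suc i) s)"
    using d(2,3) assms(2) by (auto simp: mt'_def mx'_def split: nat.splits)
  moreover have "\<mu> = (\<lambda>s. mt' 0 s + mx' 0 s)" by (simp add: mt'_def mx'_def)
  moreover have "\<kappa> = (\<lambda>s. \<Sum>\<^sub>\<infinity>i. mx' i s)" using d(4) shift by simp
  ultimately show ?thesis unfolding tau_star_def by blast
qed

text \<open>The derivation stops the mass \<open>q\<^sup>i (1 - q)\<close> of \<open>\<kappa>\<close> in round \<open>i\<close>; these masses sum to one.\<close>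

lemma tau_star_geometric:
  fixes q :: real
  assumes q: "0 \<le> q" "q < 1" and "is_subdist \<nu>" "is_subdist \<kappa>"
    and loop: "ctrans \<nu> Tau (\<lambda>s. q * (\<nu> s + (1 - q) * \<kappa> s))"
  shows "tau_star (\<lambda>s. \<nu> s + (1 - q) * \<kappa> s) \<kappa>"
proof -
  define mt where "mt i = (\<lambda>s. q ^ i * \<nu> s)" for i :: nat
  define mx where "mx i = (\<lambda>s. q ^ i * (1 - q) * \<kappa> s)" for i :: nat
  have "q ^ i \<le> 1" "q ^ i * (1 - q) \<le> 1" for i :: nat
    using q by (auto simp: power_le_one mult_le_one)
  then have "\<forall>i. is_subdist (mt i) \<and> is_subdist (mx i)"
    using q assms(3,4) by (auto intro!: is_subdist_scale simp: mt_def mx_def)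
  moreover have "\<forall>i. ctrans (mt i) Tau (\<lambda>s. mt (Suc i) s + mx (Suc i) s)"
    using ctrans_scale[OF loop, of "q ^ _"] q by (simp add: mt_def mx_def power_le_one algebra_simps)
  moreover have "(\<lambda>i. q ^ i * (1 - q)) sums (1 / (1 - q) * (1 - q))"
    using q by (intro sums_mult2 geometric_sums) simp
  then have "((\<lambda>i. q ^ i * (1 - q)) has_sum 1) UNIV"
    using q by (intro sums_nonneg_imp_has_sum) auto
  from has_sum_cmult_left[OF this] have "(\<Sum>\<^sub>\<infinity>i. mx i s) = \<kappa> s" for s
    unfolding mx_def by (simp add: infsumI)
  then have "\<kappa> = (\<lambda>s. \<Sum>\<^sub>\<infinity>i. mx i s)" by simp
  moreover have "(\<lambda>s. \<nu> s + (1 - q) * \<kappa> s) = (\<lambda>s. mt 0 s + mx 0 s)"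
    by (simp add: mt_def mx_def)
  ultimately show ?thesis unfolding tau_star_def by (intro exI conjI) assumption+
qed

lemma tau_star_step: "step u Tau \<mu> \<Longrightarrow> tau_star (dirac u) \<mu>"
  by (rule tau_star_prefix[OF is_subdist_dirac ctrans_base tau_star_refl[OF is_subdist_step]])

lemma wtrans_step:
  assumes "step u a \<mu>"
  shows "wtrans (dirac u) a \<mu>"
  unfolding wtrans_def
  using tau_star_refl[OF is_subdist_dirac[of u]] ctrans_base[OF assms]
    tau_star_refl[OF is_subdist_step[OF assms]]
  by blast

lemma hat_wtrans_step: "step u a \<mu> \<Longrightarrow> hat_wtrans (dirac u) a \<mu>"
  unfolding hat_wtrans_def using wtrans_step tau_star_step by auto

lemma lift_mono: "lift R \<mu> \<nu> \<Longrightarrow> (\<And>x y. R x y \<Longrightarrow> R' x y) \<Longrightarrow> lift R' \<mu> \<nu>"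
  by (induct rule: lift.induct) (auto intro: lift.intros)

lemma lift_pden:
  "(\<And>H. fvN H \<subseteq> fvP P \<Longrightarrow> R (substN \<theta>1 H) (substN \<theta>2 H)) \<Longrightarrow>
     lift R (pden (substP \<theta>1 P)) (pden (substP \<theta>2 P))"
proof (induct P rule: pden.induct)
  case (1 H)
  then show ?case by (auto intro: lift_base)
next
  case (2 P1 r P2)
  let ?r = "Rep_openprob r"
  define w :: "nat \<Rightarrow> real" where "w k = (if k = 0 then ?r else 1 - ?r)" for k
  define \<mu> where "\<mu> k = pden (substP \<theta>1 (if k = 0 then P1 else P2))" for k :: nat
  define \<nu> where "\<nu> k = pden (substP \<theta>2 (if k = 0 then P1 else P2))" for k :: nat
  have "0 < ?r" "?r < 1" using Rep_openprob[of r] by auto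
  then have "weights {0, 1} w" by (intro weights_finite) (auto simp: w_def)
  moreover have "\<forall>k\<in>{0, 1}. lift R (\<mu> k) (\<nu> k)" using 2 by (auto simp: \<mu>_def \<nu>_def)
  ultimately have "lift R (comb {0, 1} w \<mu>) (comb {0, 1} w \<nu>)" by (rule lift_comb)
  then show ?case by (simp add: comb_finite w_def \<mu>_def \<nu>_def)
qed

lemma sum_list_map_pos:
  "xs \<noteq> [] \<Longrightarrow> \<forall>i\<in>set xs. 0 < p i \<Longrightarrow> 0 < sum_list (map p xs :: real list)"
proof (induct xs)
  case (Cons a xs) then show ?case by (cases "xs = []") (auto intro: add_pos_pos)
qed simp

lemma pden_pbig:
  assumes "xs \<noteq> []" "\<forall>i\<in>set xs. 0 < p i"
  shows "pden (pbig p T xs) =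
    (\<lambda>s. \<Sum>n<length xs. p (xs ! n) / sum_list (map p xs) * dirac (T (xs ! n)) s)"
  using assms
proof (induct p T xs rule: pbig.induct)
  case (3 p T i j "is")
  define S where "S = sum_list (map p (j # is))"
  define r where "r = p i / (p i + S)"
  have "0 < S" unfolding S_def using 3(3) by (intro sum_list_map_pos) auto
  moreover have "0 < p i" using 3(3) by simp
  ultimately have "0 < r" "r < 1" and one_minus_r: "1 - r = S / (p i + S)"
    unfolding r_def by (simp_all add: field_simps)
  then have rep: "Rep_openprob (Abs_openprob r) = r"
    by (simp add: Abs_openprob_inverse)
  have "pbig p T (i # j # is) = PChoice (Dirac (T i)) (Abs_openprob r) (pbig p T (j # is))"
    by (simp add: r_def S_def)
  then have pden_step:
    "pden (pbig p T (i # j # is)) s = r * dirac (T i) s + (1 - r) * pden (pbig p T (j # is)) s" for s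
    by (simp only: pden.simps rep)
  have IH: "pden (pbig p T (j # is)) s =
      (\<Sum>n<length (j # is). p ((j # is) ! n) / S * dirac (T ((j # is) ! n)) s)" for s
    unfolding S_def using 3 by simp
  have frac: "S / (p i + S) * (x / S * d) = x / (p i + S) * d" for x d
    using \<open>0 < S\<close> by simp
  have total: "sum_list (map p (i # j # is)) = p i + S"
    by (simp add: S_def)
  show ?case
  proof
    fix s
    have "pden (pbig p T (i # j # is)) s = r * dirac (T i) s +
        (\<Sum>n<length (j # is). p ((j # is) ! n) / (p i + S) * dirac (T ((j # is) ! n)) s)"
      by (simp only: pden_step IH one_minus_r sum_distrib_left frac)
    then show "pden (pbig p T (i # j # is)) s = (\<Sum>n<length (i # j # is).
        p ((i # j # is) ! n) / sum_list (map p (i # j # is)) * dirac (T ((i # j # is) ! n)) s)"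
      by (simp only: length_Cons sum.lessThan_Suc_shift nth_Cons_0 nth_Cons_Suc total r_def)
  qed
qed auto

section \<open>Leaving a probabilistic \<open>\<tau>\<close>-loop\<close>

locale tau_loop =
  fixes N :: nat and w :: "nat \<Rightarrow> real" and t :: "nat \<Rightarrow> ('a, 'v) nexp"
    and \<rho> :: "('a, 'v) nexp subdist"
  assumes weight_nonneg: "\<And>n. n < N \<Longrightarrow> 0 \<le> w n"
    and weight_sum: "(\<Sum>n<N. w n) = 1"
    and loop_eq: "\<rho> = (\<lambda>s. \<Sum>n<N. w n * dirac (t n) s)"
    and step_loop: "\<And>n. n < N \<Longrightarrow> step (t n) Tau \<rho>"
begin

definition miss :: "('a, 'v) nexp \<Rightarrow> real" where
  "miss u = (\<Sum>n<N. if t n = u then 0 else w n)"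

definition miss_part :: "('a, 'v) nexp \<Rightarrow> ('a, 'v) nexp subdist" where
  "miss_part u = (\<lambda>s. \<Sum>n<N. (if t n = u then 0 else w n) * dirac (t n) s)"

lemma miss_add_hit: "miss u + (\<Sum>n<N. if t n = u then w n else 0) = 1"
  unfolding miss_def weight_sum[symmetric] sum.distrib[symmetric] by (rule sum.cong) auto

lemma miss_nonneg: "0 \<le> miss u"
  unfolding miss_def using weight_nonneg by (intro sum_nonneg) auto

lemma miss_le_1: "miss u \<le> 1"
proof -
  have "0 \<le> (\<Sum>n<N. if t n = u then w n else 0)"
    using weight_nonneg by (intro sum_nonneg) auto
  with miss_add_hit[of u] show ?thesis by linarith
qed

lemma miss_less_1:
  assumes "k < N" "0 < w k"
  shows "miss (t k) < 1"
proof -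
  have "w k \<le> (\<Sum>n<N. if t n = t k then w n else 0)"
    using assms weight_nonneg
    by (intro member_le_sum[of k _ "\<lambda>n. if t n = t k then w n else 0", simplified]) auto
  with assms miss_add_hit[of "t k"] show ?thesis by simp
qed

lemma loop_split: "\<rho> s = miss_part u s + (1 - miss u) * dirac u s"
proof -
  have "\<rho> s = (\<Sum>n<N. (if t n = u then 0 else w n) * dirac (t n) s
      + (if t n = u then w n else 0) * dirac u s)"
    unfolding loop_eq by (rule sum.cong) auto
  also have "\<dots> = miss_part u s + (1 - miss u) * dirac u s"
    using miss_add_hit[of u] by (simp add: miss_part_def sum.distrib sum_distrib_right[symmetric])
  finally show ?thesis .
qed

lemma is_subdist_loop: "is_subdist \<rho>"
proof -
  have "has_mass \<rho> (\<Sum>n<N. w n * 1)"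
    unfolding loop_eq using weight_nonneg by (intro has_mass_sum) (auto simp: has_mass_dirac)
  then show ?thesis using weight_sum by (simp add: has_mass_is_subdist)
qed

lemma is_subdist_miss_part: "is_subdist (miss_part u)"
proof -
  have "has_mass (miss_part u) (\<Sum>n<N. (if t n = u then 0 else w n) * 1)"
    unfolding miss_part_def using weight_nonneg by (intro has_mass_sum) (auto simp: has_mass_dirac)
  then show ?thesis using miss_le_1[of u] by (simp add: miss_def has_mass_is_subdist)
qed

lemma ctrans_miss_part: "ctrans (miss_part u) Tau (\<lambda>s. miss u * \<rho> s)"
proof -
  have "ctrans (miss_part u) Tau (\<lambda>s. \<Sum>n<N. (if t n = u then 0 else w n) * \<rho> s)"
    unfolding miss_part_def using weight_nonneg miss_le_1[of u] step_loop
    by (intro ctrans_sum) (auto simp: miss_def)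
  then show ?thesis by (simp add: miss_def sum_distrib_right)
qed

lemma ctrans_loop_target:
  assumes "step u Tau \<mu>"
  shows "ctrans \<rho> Tau (\<lambda>s. miss u * \<rho> s + (1 - miss u) * \<mu> s)"
proof -
  have "ctrans (\<lambda>s. \<Sum>n<N. w n * dirac (t n) s) Tau
      (\<lambda>s. \<Sum>n<N. w n * (if t n = u then \<mu> else \<rho>) s)"
    using weight_nonneg weight_sum step_loop assms by (intro ctrans_sum) auto
  then have "ctrans \<rho> Tau (\<lambda>s. \<Sum>n<N. w n * (if t n = u then \<mu> s else \<rho> s))"
    by (simp only: loop_eq[symmetric] if_distrib[of "\<lambda>f. f _"])
  moreover have "(\<Sum>n<N. w n * (if t n = u then \<mu> s else \<rho> s)) =
      miss u * \<rho> s + (1 - miss u) * \<mu> s" for s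
  proof -
    have "(\<Sum>n<N. w n * (if t n = u then \<mu> s else \<rho> s)) =
        (\<Sum>n<N. (if t n = u then 0 else w n) * \<rho> s + (if t n = u then w n else 0) * \<mu> s)"
      by (rule sum.cong) auto
    then show ?thesis
      using miss_add_hit[of u] by (simp add: miss_def sum.distrib sum_distrib_right[symmetric])
  qed
  ultimately show ?thesis by simp
qed

lemma tau_star_loop_target:
  assumes "k < N" "0 < w k"
  shows "tau_star \<rho> (dirac (t k))"
proof -
  let ?q = "miss (t k)"
  have "ctrans (miss_part (t k)) Tau (\<lambda>s. ?q * (miss_part (t k) s + (1 - ?q) * dirac (t k) s))"
    using ctrans_miss_part[of "t k"] by (simp add: loop_split[of _ "t k"])
  then have "tau_star (\<lambda>s. miss_part (t k) s + (1 - ?q) * dirac (t k) s) (dirac (t k))"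
    using miss_nonneg miss_less_1[OF assms] is_subdist_miss_part is_subdist_dirac
    by (intro tau_star_geometric) auto
  then show ?thesis by (simp add: loop_split[of _ "t k", symmetric])
qed

lemma tau_star_loop_target_step:
  assumes "k < N" "0 < w k" "step (t k) Tau \<mu>"
  shows "tau_star \<rho> \<mu>"
proof -
  let ?q = "miss (t k)"
  have "ctrans (\<lambda>s. ?q * \<rho> s) Tau (\<lambda>s. ?q * (?q * \<rho> s + (1 - ?q) * \<mu> s))"
    using ctrans_scale[OF ctrans_loop_target[OF assms(3)] miss_nonneg miss_le_1] .
  with is_subdist_scale[OF is_subdist_loop miss_nonneg miss_le_1]
  have "tau_star (\<lambda>s. ?q * \<rho> s + (1 - ?q) * \<mu> s) \<mu>"
    by (rule tau_star_geometric[OF miss_nonneg miss_less_1[OF assms(1,2)] _ is_subdist_step[OF assms(3)]])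
  with ctrans_loop_target[OF assms(3)] show ?thesis
    by (rule tau_star_prefix[OF is_subdist_loop])
qed

end

locale loop_law =
  fixes p :: "'i \<Rightarrow> real" and e :: "'i \<Rightarrow> ('a, 'v) nexp" and f :: "('a, 'v) nexp"
    and X :: 'v and js :: "'i list"
  assumes p_pos: "\<forall>i\<in>set js. 0 < p i" and p_sum: "sum_list (map p js) = 1"
    and fv_e: "\<forall>i\<in>set js. fvN (e i) \<subseteq> {X}" and fv_f: "fvN f \<subseteq> {X}"
begin

definition Lrec :: "('a, 'v) nexp" where
  "Lrec = Rec X (Plus (Pre Tau (pbig p (\<lambda>i. Plus (Var X) (e i)) js)) f)"
definition Rrec :: "('a, 'v) nexp" where
  "Rrec = Rec X (Plus (Plus (Pre Tau (Dirac (Var X))) (nsum e js)) f)"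
definition closeL :: "('a, 'v) nexp \<Rightarrow> ('a, 'v) nexp" where
  "closeL G = substN (Var(X := Lrec)) G"
definition closeR :: "('a, 'v) nexp \<Rightarrow> ('a, 'v) nexp" where
  "closeR G = substN (Var(X := Rrec)) G"
definition branchL :: "'i \<Rightarrow> ('a, 'v) nexp" where
  "branchL i = Plus Lrec (closeL (e i))"
definition distL :: "('a, 'v) nexp subdist" where
  "distL = pden (pbig p branchL js)"

lemma closed_Lrec: "closed Lrec"
proof -
  have "fvP (pbig p (\<lambda>i. Plus (Var X) (e i)) js) \<subseteq> {X}"
    using fvP_pbig[of p "\<lambda>i. Plus (Var X) (e i)" js] fv_e by fastforce
  with fv_f show ?thesis by (auto simp: closed_def Lrec_def)
qed

lemma closed_Rrec: "closed Rrec"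
proof -
  have "fvN (nsum e js) \<subseteq> {X}"
    using fvN_nsum[of e js] fv_e by fastforce
  with fv_f show ?thesis by (auto simp: closed_def Rrec_def)
qed

lemma closed_closeL: "fvN G \<subseteq> {X} \<Longrightarrow> closed (closeL G)"
  unfolding closeL_def using closed_Lrec by (intro closed_substN) auto

lemma closed_branchL: "i \<in> set js \<Longrightarrow> closed (branchL i)"
  using closed_closeL[of "e i"] closed_Lrec fv_e by (auto simp: branchL_def closed_def)

lemma branchL_eq: "branchL = (\<lambda>i. Plus Lrec (substN (Var(X := Lrec)) (e i)))"
  by (auto simp: branchL_def closeL_def)

lemma step_Lrec: "step Lrec a \<mu> \<longleftrightarrow> (a = Tau \<and> \<mu> = distL) \<or> step (closeL f) a \<mu>"
  using step_Rec[of X "Plus (Pre Tau (pbig p (\<lambda>i. Plus (Var X) (e i)) js)) f"]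
  by (simp add: Lrec_def[symmetric] step_Plus step_Pre substP_pbig distL_def branchL_eq closeL_def)

lemma stepn_LrecD:
  assumes "stepn n Lrec a \<mu>"
  shows "(a = Tau \<and> \<mu> = distL) \<or> (\<exists>m<n. stepn m (closeL f) a \<mu>)"
proof -
  obtain m where m: "m < n" "stepn m (Plus (Pre Tau (pbig p branchL js)) (closeL f)) a \<mu>"
    using stepn_RecD[OF assms[unfolded Lrec_def]]
    by (auto simp: Lrec_def[symmetric] substP_pbig branchL_eq closeL_def)
  from stepn_PlusD[OF m(2)] obtain k where "k < m"
    "stepn k (Pre Tau (pbig p branchL js)) a \<mu> \<or> stepn k (closeL f) a \<mu>"
    by blast
  with m(1) show ?thesis by (auto dest: stepn_PreD simp: distL_def)
qed

lemma step_Rrec: "step Rrec a \<mu> \<longleftrightarrow>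
    (a = Tau \<and> \<mu> = dirac Rrec) \<or> (\<exists>i\<in>set js. step (closeR (e i)) a \<mu>) \<or> step (closeR f) a \<mu>"
  using step_Rec[of X "Plus (Plus (Pre Tau (Dirac (Var X))) (nsum e js)) f"]
  by (simp add: Rrec_def[symmetric] step_Plus step_Pre step_nsum substN_nsum closeR_def)

lemma stepn_RrecD:
  assumes "stepn n Rrec a \<mu>"
  shows "(a = Tau \<and> \<mu> = dirac Rrec) \<or>
    (\<exists>i\<in>set js. \<exists>m<n. stepn m (closeR (e i)) a \<mu>) \<or> (\<exists>m<n. stepn m (closeR f) a \<mu>)"
proof -
  obtain m where m: "m < n"
    "stepn m (Plus (Plus (Pre Tau (Dirac Rrec)) (nsum (\<lambda>i. closeR (e i)) js)) (closeR f)) a \<mu>"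
    using stepn_RecD[OF assms[unfolded Rrec_def]]
    by (auto simp: Rrec_def[symmetric] substN_nsum closeR_def)
  from stepn_PlusD[OF m(2)] obtain k where k: "k < m"
    "stepn k (Plus (Pre Tau (Dirac Rrec)) (nsum (\<lambda>i. closeR (e i)) js)) a \<mu> \<or> stepn k (closeR f) a \<mu>"
    by blast
  show ?thesis
  proof (cases "stepn k (closeR f) a \<mu>")
    case False
    with k obtain l where "l < k" "stepn l (Pre Tau (Dirac Rrec)) a \<mu> \<or>
        stepn l (nsum (\<lambda>i. closeR (e i)) js) a \<mu>"
      using stepn_PlusD by blast
    with k(1) m(1) show ?thesis
      by (auto dest!: stepn_PreD stepn_nsumD intro: le_less_trans less_trans)
  qed (use k m in \<open>auto intro: less_trans\<close>)
qed

lemma js_nonempty: "js \<noteq> []"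
  using p_sum by auto

lemma step_branchL_Tau: "step (branchL i) Tau distL"
  unfolding branchL_def by (intro step_plusL) (simp add: step_Lrec)

lemma distL_eq: "distL = (\<lambda>s. \<Sum>n<length js. p (js ! n) * dirac (branchL (js ! n)) s)"
  unfolding distL_def using pden_pbig[OF js_nonempty p_pos] p_sum by simp

sublocale loop: tau_loop "length js" "\<lambda>n. p (js ! n)" "\<lambda>n. branchL (js ! n)" distL
proof
  show "0 \<le> p (js ! n)" if "n < length js" for n
    using p_pos that by (auto intro: less_imp_le)
  show "(\<Sum>n<length js. p (js ! n)) = 1"
    using p_sum by (simp add: sum_list_sum_nth atLeast0LessThan)
  show "distL = (\<lambda>s. \<Sum>n<length js. p (js ! n) * dirac (branchL (js ! n)) s)"
    by (rule distL_eq)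
qed (rule step_branchL_Tau)

lemma tau_star_distL_branchL:
  assumes "k \<in> set js"
  shows "tau_star distL (dirac (branchL k))"
proof -
  obtain n where "n < length js" "js ! n = k" using assms by (auto simp: in_set_conv_nth)
  with loop.tau_star_loop_target[of n] p_pos assms show ?thesis by simp
qed

lemma tau_star_distL_branchL_step:
  assumes "k \<in> set js" "step (branchL k) Tau \<mu>"
  shows "tau_star distL \<mu>"
proof -
  obtain n where "n < length js" "js ! n = k" using assms by (auto simp: in_set_conv_nth)
  with loop.tau_star_loop_target_step[of n] p_pos assms show ?thesis by simp
qed

text \<open>The second alternative is a weak transition, because the \<open>\<tau>\<close>-loop through \<open>distL\<close>
  reaches \<open>branchL k\<close> with probability one.\<close>

definition wstepL :: "('a, 'v) nexp \<Rightarrow> 'a act \<Rightarrow> ('a, 'v) nexp subdist \<Rightarrow> bool" where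
  "wstepL t a \<mu> \<longleftrightarrow> step t a \<mu> \<or> (step t Tau distL \<and> (\<exists>k\<in>set js. step (closeL (e k)) a \<mu>))"

lemma wstepL_mono: "wstepL t a \<mu> \<Longrightarrow> (\<And>a \<mu>. step t a \<mu> \<Longrightarrow> step t' a \<mu>) \<Longrightarrow> wstepL t' a \<mu>"
  unfolding wstepL_def by blast

lemma wstepL_PlusL: "wstepL A a \<mu> \<Longrightarrow> wstepL (Plus A B) a \<mu>"
  by (erule wstepL_mono) (rule step_plusL)

lemma wstepL_PlusR: "wstepL B a \<mu> \<Longrightarrow> wstepL (Plus A B) a \<mu>"
  by (erule wstepL_mono) (rule step_plusR)

lemma wstepL_closeL_f: "wstepL (closeL f) a \<mu> \<Longrightarrow> wstepL Lrec a \<mu>"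
  by (erule wstepL_mono) (simp add: step_Lrec)

lemma wstepL_closeL_e:
  "i \<in> set js \<Longrightarrow> wstepL (closeL (e i)) a \<mu> \<Longrightarrow> wstepL Lrec a \<mu>"
  unfolding wstepL_def by (auto simp: step_Lrec)

lemma wstepL_wtrans:
  assumes "wstepL t a \<mu>"
  shows "wtrans (dirac t) a \<mu>"
proof -
  { fix k assume t: "step t Tau distL" and k: "k \<in> set js" "step (closeL (e k)) a \<mu>"
    have "tau_star (dirac t) (dirac (branchL k))"
      by (rule tau_star_prefix[OF is_subdist_dirac ctrans_base[OF t] tau_star_distL_branchL[OF k(1)]])
    moreover have "ctrans (dirac (branchL k)) a \<mu>"
      using k(2) by (auto intro: ctrans_base step_plusR simp: branchL_def)
    ultimately have "wtrans (dirac t) a \<mu>"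
      unfolding wtrans_def using tau_star_refl[OF is_subdist_step[OF k(2)]] by blast }
  with assms wtrans_step show ?thesis unfolding wstepL_def by blast
qed

lemma wstepL_hat_wtrans:
  assumes "wstepL t a \<mu>"
  shows "hat_wtrans (dirac t) a \<mu>"
proof (cases "a = Tau")
  case True
  { fix k assume t: "step t Tau distL" and k: "k \<in> set js" "step (closeL (e k)) Tau \<mu>"
    have "step (branchL k) Tau \<mu>" using k(2) by (simp add: branchL_def step_plusR)
    then have "tau_star (dirac t) \<mu>"
      by (rule tau_star_prefix[OF is_subdist_dirac ctrans_base[OF t] tau_star_distL_branchL_step[OF k(1)]]) }
  with assms True hat_wtrans_step show ?thesis unfolding wstepL_def hat_wtrans_def by auto
next
  case False
  with wstepL_wtrans[OF assms] show ?thesis by (simp add: hat_wtrans_def)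
qed

text \<open>A context
  acts by simultaneous substitution of closed terms for all its free variables, which cannot
  capture.\<close>

inductive ctx_rel :: "('a, 'v) nexp \<Rightarrow> ('a, 'v) nexp \<Rightarrow> bool" where
  ctx_rel_loop: "ctx_rel Lrec Rrec"
| ctx_rel_subst: "(\<forall>Z\<in>fvN H. ctx_rel (\<theta>1 Z) (\<theta>2 Z)) \<Longrightarrow> ctx_rel (substN \<theta>1 H) (substN \<theta>2 H)"

text \<open>\<open>Rrec\<close> answers the \<open>\<tau>\<close>-step of \<open>Lrec\<close> into \<open>distL\<close> by its \<open>\<tau>\<close>-loop, hence the
  pairs \<open>(branchL i, Rrec)\<close>.\<close>

definition bisim_rel :: "('a, 'v) nexp \<Rightarrow> ('a, 'v) nexp \<Rightarrow> bool" where
  "bisim_rel t t' \<longleftrightarrow> ctx_rel t t' \<or> (\<exists>i\<in>set js. t = branchL i \<and> t' = Rrec)"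

lemma ctx_rel_closed: "ctx_rel t t' \<Longrightarrow> closed t \<and> closed t'"
  by (induct rule: ctx_rel.induct) (auto simp: closed_Lrec closed_Rrec intro!: closed_substN)

lemma ctx_rel_cases:
  "ctx_rel t t' \<Longrightarrow> (t = Lrec \<and> t' = Rrec) \<or>
     (\<exists>H \<theta>1 \<theta>2. (\<forall>Z\<in>fvN H. ctx_rel (\<theta>1 Z) (\<theta>2 Z)) \<and> (\<forall>Z. H \<noteq> Var Z) \<and>
        t = substN \<theta>1 H \<and> t' = substN \<theta>2 H)"
proof (induct rule: ctx_rel.induct)
  case (ctx_rel_subst H \<theta>1 \<theta>2)
  show ?case
  proof (cases "\<exists>Z. H = Var Z")
    case True
    then obtain Z where "H = Var Z" by blast
    with ctx_rel_subst show ?thesis by simp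
  next
    case False
    with ctx_rel_subst show ?thesis by blast
  qed
qed simp

lemma ctx_rel_close: "fvN G \<subseteq> {X} \<Longrightarrow> ctx_rel (closeL G) (closeR G)"
  unfolding closeL_def closeR_def by (intro ctx_rel_subst) (auto intro: ctx_rel_loop)

lemma ctx_rel_lift_pden:
  assumes "\<forall>Z\<in>fvN (Pre b P). ctx_rel (\<theta>1 Z) (\<theta>2 Z)"
  shows "lift bisim_rel (pden (substP \<theta>1 P)) (pden (substP \<theta>2 P))"
  using assms by (intro lift_pden) (auto simp: bisim_rel_def intro!: ctx_rel_subst)

lemma ctx_rel_Rec_unfold:
  assumes "\<forall>Z\<in>fvN (Rec Y H). ctx_rel (\<theta>1 Z) (\<theta>2 Z)"
  shows "ctx_rel (substN (\<theta>1(Y := substN \<theta>1 (Rec Y H))) H) (substN (\<theta>2(Y := substN \<theta>2 (Rec Y H))) H)"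
  using assms ctx_rel_subst[OF assms] by (intro ctx_rel_subst) auto

lemma lift_distL: "lift bisim_rel distL (dirac Rrec)"
proof -
  let ?w = "\<lambda>n. p (js ! n)"
  have "weights {..<length js} ?w"
    using loop.weight_nonneg loop.weight_sum by (intro weights_finite) auto
  moreover have "\<forall>n\<in>{..<length js}. lift bisim_rel (dirac (branchL (js ! n))) (dirac Rrec)"
  proof (intro ballI lift_base)
    fix n assume "n \<in> {..<length js}"
    then have "js ! n \<in> set js" by simp
    then show "bisim_rel (branchL (js ! n)) Rrec" unfolding bisim_rel_def by blast
  qed
  ultimately have "lift bisim_rel (comb {..<length js} ?w (\<lambda>n. dirac (branchL (js ! n))))
      (comb {..<length js} ?w (\<lambda>n. dirac Rrec))"
    by (rule lift_comb)
  then show ?thesis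
    by (simp add: comb_finite distL_eq sum_distrib_right[symmetric] loop.weight_sum)
qed

lemma stepn_Lrec_forward:
  assumes IH: "\<And>m t t' a \<mu>. m < n \<Longrightarrow> stepn m t a \<mu> \<Longrightarrow> ctx_rel t t' \<Longrightarrow>
      \<exists>\<nu>. step t' a \<nu> \<and> lift bisim_rel \<mu> \<nu>"
    and "stepn n Lrec a \<mu>"
  shows "\<exists>\<nu>. step Rrec a \<nu> \<and> lift bisim_rel \<mu> \<nu>"
  using stepn_LrecD[OF assms(2)]
proof (elim disjE exE conjE)
  assume "a = Tau" "\<mu> = distL"
  then show ?thesis using lift_distL by (auto simp: step_Rrec)
next
  fix m assume "m < n" "stepn m (closeL f) a \<mu>"
  from IH[OF this ctx_rel_close[OF fv_f]] show ?thesis by (auto simp: step_Rrec)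
qed

lemma stepn_substN_forward:
  assumes IH: "\<And>m t t' a \<mu>. m < n \<Longrightarrow> stepn m t a \<mu> \<Longrightarrow> ctx_rel t t' \<Longrightarrow>
      \<exists>\<nu>. step t' a \<nu> \<and> lift bisim_rel \<mu> \<nu>"
    and rel: "\<forall>Z\<in>fvN H. ctx_rel (\<theta>1 Z) (\<theta>2 Z)" and "\<forall>Z. H \<noteq> Var Z"
    and st: "stepn n (substN \<theta>1 H) a \<mu>"
  shows "\<exists>\<nu>. step (substN \<theta>2 H) a \<nu> \<and> lift bisim_rel \<mu> \<nu>"
proof (cases H)
  case (Pre b P)
  with st have "a = b" "\<mu> = pden (substP \<theta>1 P)" by (auto dest: stepn_PreD)
  moreover have "lift bisim_rel (pden (substP \<theta>1 P)) (pden (substP \<theta>2 P))"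
    using rel Pre by (intro ctx_rel_lift_pden[of b]) simp
  ultimately show ?thesis using Pre by (auto simp: step_Pre)
next
  case (Plus H1 H2)
  from st Plus obtain m G where "m < n" "G \<in> {H1, H2}" "stepn m (substN \<theta>1 G) a \<mu>"
    using stepn_PlusD by fastforce
  moreover from this(2) have "ctx_rel (substN \<theta>1 G) (substN \<theta>2 G)"
    using rel Plus by (auto intro!: ctx_rel_subst)
  ultimately obtain \<nu> where "step (substN \<theta>2 G) a \<nu>" "lift bisim_rel \<mu> \<nu>"
    using IH by blast
  with \<open>G \<in> {H1, H2}\<close> Plus show ?thesis by (auto simp: step_Plus)
next
  case (Rec Y H1)
  have closed: "\<forall>Z\<in>fvN (Rec Y H1). closed (\<theta>1 Z)" "\<forall>Z\<in>fvN (Rec Y H1). closed (\<theta>2 Z)"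
    using rel Rec ctx_rel_closed by blast+
  from stepn_substN_RecD[OF closed(1) st[unfolded Rec]] obtain m where
    "m < n" "stepn m (substN (\<theta>1(Y := substN \<theta>1 (Rec Y H1))) H1) a \<mu>"
    by blast
  moreover have "ctx_rel (substN (\<theta>1(Y := substN \<theta>1 (Rec Y H1))) H1)
      (substN (\<theta>2(Y := substN \<theta>2 (Rec Y H1))) H1)"
    using rel Rec by (intro ctx_rel_Rec_unfold) simp
  ultimately obtain \<nu> where
    "step (substN (\<theta>2(Y := substN \<theta>2 (Rec Y H1))) H1) a \<nu>" "lift bisim_rel \<mu> \<nu>"
    using IH by blast
  then show ?thesis unfolding Rec step_substN_Rec[OF closed(2)] by blast
qed (use assms in \<open>auto simp: stepn_Nil\<close>)

lemma ctx_rel_forward: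
  "stepn n t a \<mu> \<Longrightarrow> ctx_rel t t' \<Longrightarrow> \<exists>\<nu>. step t' a \<nu> \<and> lift bisim_rel \<mu> \<nu>"
proof (induction n arbitrary: t t' a \<mu> rule: less_induct)
  case (less n)
  from ctx_rel_cases[OF less.prems(2)] show ?case
  proof (elim disjE exE conjE)
    assume "t = Lrec" "t' = Rrec"
    with less.prems(1) have "stepn n Lrec a \<mu>" by simp
    then have "\<exists>\<nu>. step Rrec a \<nu> \<and> lift bisim_rel \<mu> \<nu>"
      by (rule stepn_Lrec_forward[rotated]) (rule less.IH)
    with \<open>t' = Rrec\<close> show ?thesis by simp
  next
    fix H \<theta>1 \<theta>2 assume "\<forall>Z\<in>fvN H. ctx_rel (\<theta>1 Z) (\<theta>2 Z)" "\<forall>Z. H \<noteq> Var Z"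
      "t = substN \<theta>1 H" "t' = substN \<theta>2 H"
    with less.prems(1) show ?thesis
      by (auto intro: stepn_substN_forward[rotated 3] less.IH)
  qed
qed

lemma stepn_Rrec_backward:
  assumes IH: "\<And>m t t' a \<nu>. m < n \<Longrightarrow> stepn m t' a \<nu> \<Longrightarrow> ctx_rel t t' \<Longrightarrow>
      \<exists>\<mu>. wstepL t a \<mu> \<and> lift bisim_rel \<mu> \<nu>"
    and "stepn n Rrec a \<nu>"
  shows "\<exists>\<mu>. wstepL Lrec a \<mu> \<and> lift bisim_rel \<mu> \<nu>"
  using stepn_RrecD[OF assms(2)]
proof (elim disjE bexE exE conjE)
  assume "a = Tau" "\<nu> = dirac Rrec"
  then show ?thesis using lift_distL by (auto simp: wstepL_def step_Lrec)
next
  fix i m assume i: "i \<in> set js" and "m < n" "stepn m (closeR (e i)) a \<nu>"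
  from IH[OF this(2,3) ctx_rel_close] fv_e i show ?thesis
    by (auto intro: wstepL_closeL_e[OF i])
next
  fix m assume "m < n" "stepn m (closeR f) a \<nu>"
  from IH[OF this ctx_rel_close[OF fv_f]] show ?thesis
    by (blast intro: wstepL_closeL_f)
qed

lemma stepn_substN_backward:
  assumes IH: "\<And>m t t' a \<nu>. m < n \<Longrightarrow> stepn m t' a \<nu> \<Longrightarrow> ctx_rel t t' \<Longrightarrow>
      \<exists>\<mu>. wstepL t a \<mu> \<and> lift bisim_rel \<mu> \<nu>"
    and rel: "\<forall>Z\<in>fvN H. ctx_rel (\<theta>1 Z) (\<theta>2 Z)" and "\<forall>Z. H \<noteq> Var Z"
    and st: "stepn n (substN \<theta>2 H) a \<nu>"
  shows "\<exists>\<mu>. wstepL (substN \<theta>1 H) a \<mu> \<and> lift bisim_rel \<mu> \<nu>"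
proof (cases H)
  case (Pre b P)
  with st have "a = b" "\<nu> = pden (substP \<theta>2 P)" by (auto dest: stepn_PreD)
  moreover have "lift bisim_rel (pden (substP \<theta>1 P)) (pden (substP \<theta>2 P))"
    using rel Pre by (intro ctx_rel_lift_pden[of b]) simp
  ultimately show ?thesis using Pre by (auto simp: wstepL_def step_Pre)
next
  case (Plus H1 H2)
  from st Plus obtain m G where "m < n" "G \<in> {H1, H2}" "stepn m (substN \<theta>2 G) a \<nu>"
    using stepn_PlusD by fastforce
  moreover from this(2) have "ctx_rel (substN \<theta>1 G) (substN \<theta>2 G)"
    using rel Plus by (auto intro!: ctx_rel_subst)
  ultimately obtain \<mu> where "wstepL (substN \<theta>1 G) a \<mu>" "lift bisim_rel \<mu> \<nu>"
    using IH by blast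
  with \<open>G \<in> {H1, H2}\<close> Plus show ?thesis by (auto intro: wstepL_PlusL wstepL_PlusR)
next
  case (Rec Y H1)
  have closed: "\<forall>Z\<in>fvN (Rec Y H1). closed (\<theta>1 Z)" "\<forall>Z\<in>fvN (Rec Y H1). closed (\<theta>2 Z)"
    using rel Rec ctx_rel_closed by blast+
  from stepn_substN_RecD[OF closed(2) st[unfolded Rec]] obtain m where
    "m < n" "stepn m (substN (\<theta>2(Y := substN \<theta>2 (Rec Y H1))) H1) a \<nu>"
    by blast
  moreover have "ctx_rel (substN (\<theta>1(Y := substN \<theta>1 (Rec Y H1))) H1)
      (substN (\<theta>2(Y := substN \<theta>2 (Rec Y H1))) H1)"
    using rel Rec by (intro ctx_rel_Rec_unfold) simp
  ultimately obtain \<mu> where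
    "wstepL (substN (\<theta>1(Y := substN \<theta>1 (Rec Y H1))) H1) a \<mu>" "lift bisim_rel \<mu> \<nu>"
    using IH by blast
  moreover from this(1) have "wstepL (substN \<theta>1 H) a \<mu>"
    unfolding Rec by (rule wstepL_mono) (simp only: step_substN_Rec[OF closed(1)])
  ultimately show ?thesis by blast
qed (use assms in \<open>auto simp: stepn_Nil\<close>)

lemma ctx_rel_backward:
  "stepn n t' a \<nu> \<Longrightarrow> ctx_rel t t' \<Longrightarrow> \<exists>\<mu>. wstepL t a \<mu> \<and> lift bisim_rel \<mu> \<nu>"
proof (induction n arbitrary: t t' a \<nu> rule: less_induct)
  case (less n)
  from ctx_rel_cases[OF less.prems(2)] show ?case
  proof (elim disjE exE conjE)
    assume "t = Lrec" "t' = Rrec"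
    with less.prems(1) have "stepn n Rrec a \<nu>" by simp
    then have "\<exists>\<mu>. wstepL Lrec a \<mu> \<and> lift bisim_rel \<mu> \<nu>"
      by (rule stepn_Rrec_backward[rotated]) (rule less.IH)
    with \<open>t = Lrec\<close> show ?thesis by simp
  next
    fix H \<theta>1 \<theta>2 assume "\<forall>Z\<in>fvN H. ctx_rel (\<theta>1 Z) (\<theta>2 Z)" "\<forall>Z. H \<noteq> Var Z"
      "t = substN \<theta>1 H" "t' = substN \<theta>2 H"
    with less.prems(1) show ?thesis
      by (auto intro: stepn_substN_backward[rotated 3] less.IH)
  qed
qed

lemma bisim_rel_closed: "bisim_rel t t' \<Longrightarrow> closed t \<and> closed t'"
  unfolding bisim_rel_def using ctx_rel_closed closed_branchL closed_Rrec by blast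

lemma bisim_rel_forward:
  assumes "bisim_rel t t'" "step t a \<mu>"
  shows "\<exists>\<nu>. step t' a \<nu> \<and> lift bisim_rel \<mu> \<nu>"
proof -
  have forward: "\<exists>\<nu>. step u' a \<nu> \<and> lift bisim_rel \<mu> \<nu>" if "ctx_rel u u'" "step u a \<mu>" for u u'
    using that ctx_rel_forward step_iff_stepn by blast
  from assms(1) consider "ctx_rel t t'" | i where "i \<in> set js" "t = branchL i" "t' = Rrec"
    unfolding bisim_rel_def by blast
  then show ?thesis
  proof cases
    case 2
    with assms(2) have "step Lrec a \<mu> \<or> step (closeL (e i)) a \<mu>"
      by (simp add: branchL_def step_Plus)
    then show ?thesis
    proof
      assume "step (closeL (e i)) a \<mu>"
      with forward[OF ctx_rel_close] fv_e 2 obtain \<nu> where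
        "step (closeR (e i)) a \<nu>" "lift bisim_rel \<mu> \<nu>"
        by blast
      with 2 show ?thesis by (auto simp: step_Rrec)
    qed (use 2 forward[OF ctx_rel_loop] in blast)
  qed (use assms(2) forward in blast)
qed

lemma bisim_rel_backward:
  assumes "bisim_rel t t'" "step t' a \<nu>"
  shows "\<exists>\<mu>. wstepL t a \<mu> \<and> lift bisim_rel \<mu> \<nu>"
proof -
  have backward: "\<exists>\<mu>. wstepL u a \<mu> \<and> lift bisim_rel \<mu> \<nu>" if "ctx_rel u t'" for u
    using that assms(2) ctx_rel_backward step_iff_stepn by blast
  from assms(1) consider "ctx_rel t t'" | i where "t = branchL i" "t' = Rrec"
    unfolding bisim_rel_def by blast
  then show ?thesis
  proof cases
    case 2
    with backward[of Lrec] ctx_rel_loop obtain \<mu> where "wstepL Lrec a \<mu>" "lift bisim_rel \<mu> \<nu>"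
      by auto
    with 2 show ?thesis unfolding branchL_def by (blast intro: wstepL_PlusL)
  qed (rule backward)
qed

lemma weak_bisim_bisim_rel: "weak_bisim bisim_rel"
  unfolding weak_bisim_def
proof (intro allI impI conjI)
  fix t t' assume rel: "bisim_rel t t'"
  show "closed t" "closed t'" using bisim_rel_closed[OF rel] by auto
  show "\<exists>\<nu>. hat_wtrans (dirac t') a \<nu> \<and> lift bisim_rel \<mu> \<nu>" if "step t a \<mu>" for a \<mu>
    using bisim_rel_forward[OF rel that] hat_wtrans_step by blast
  show "\<exists>\<mu>. hat_wtrans (dirac t) a \<mu> \<and> lift bisim_rel \<mu> \<nu>" if "step t' a \<nu>" for a \<nu>
    using bisim_rel_backward[OF rel that] wstepL_hat_wtrans by blast
qed

lemma ccong_Lrec_Rrec: "ccong Lrec Rrec"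
  unfolding ccong_def
proof (intro allI impI conjI)
  have wbisim: "lift bisim_rel \<mu> \<nu> \<Longrightarrow> lift wbisim \<mu> \<nu>" for \<mu> \<nu>
    using weak_bisim_bisim_rel by (elim lift_mono) (auto simp: wbisim_def)
  have rel: "bisim_rel Lrec Rrec" by (simp add: bisim_rel_def ctx_rel_loop)
  show "closed Lrec" "closed Rrec" by (rule closed_Lrec, rule closed_Rrec)
  show "\<exists>\<nu>. wtrans (dirac Rrec) a \<nu> \<and> lift wbisim \<mu> \<nu>" if "step Lrec a \<mu>" for a \<mu>
    using bisim_rel_forward[OF rel that] wtrans_step wbisim by blast
  show "\<exists>\<mu>. wtrans (dirac Lrec) a \<mu> \<and> lift wbisim \<mu> \<nu>" if "step Rrec a \<nu>" for a \<nu>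
    using bisim_rel_backward[OF rel that] wstepL_wtrans wbisim by blast
qed

end

lemma fvN_substN_close:
  "\<forall>Y. closed (\<sigma> Y) \<Longrightarrow> fvN (substN (\<sigma>(X := Var X)) G) \<subseteq> {X}"
  using fvN_substN(1)[of "\<sigma>(X := Var X)" G] by (auto simp: closed_def split: if_splits)

theorem mainTheorem5:
  fixes I :: "'i set" and "is" :: "'i list"
    and E :: "'i \<Rightarrow> ('a, 'v) nexp" and F :: "('a, 'v) nexp" and X :: 'v
    and p :: "'i \<Rightarrow> real"
  assumes "finite I" and "distinct is" and "set is = I"
    and "\<forall>i\<in>I. 0 < p i" and "(\<Sum>i\<in>I. p i) = 1"
  shows "cong
     (Rec X (Plus (Pre Tau (pbig p (\<lambda>i. Plus (Var X) (E i)) is)) F))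
     (Rec X (Plus (Plus (Pre Tau (Dirac (Var X))) (nsum E is)) F))"
  unfolding cong_def
proof (intro allI impI)
  fix \<sigma> :: "'v \<Rightarrow> ('a, 'v) nexp" assume \<sigma>: "\<forall>Y. closed (\<sigma> Y)"
  interpret loop_law p "\<lambda>i. substN (\<sigma>(X := Var X)) (E i)" "substN (\<sigma>(X := Var X)) F" X "is"
    using assms fvN_substN_close[OF \<sigma>]
    by unfold_locales (simp_all add: sum_list_distinct_conv_sum_set)
  show "ccong (substN \<sigma> (Rec X (Plus (Pre Tau (pbig p (\<lambda>i. Plus (Var X) (E i)) is)) F)))
      (substN \<sigma> (Rec X (Plus (Plus (Pre Tau (Dirac (Var X))) (nsum E is)) F)))"
    using ccong_Lrec_Rrec by (simp add: Lrec_def Rrec_def substP_pbig substN_nsum)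
qed

end
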